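(* Let $r$ be a positive integer, $A=A_r$, and let $M$ be the $\aleph_1$-separable group (right $A$-module) constructed as in the context, with $A$ regarded as a subring of $\operatorname{End}(M)$ via its action on $M$. If $A$ is algebraically closed in $\operatorname{End}(M)$, then for any positive integers $m$ and $k$, $M^m$ is isomorphic to $M^k$ if and only if $m\equiv k\pmod r$.
   Context: $A=A_r$ is the ring freely generated by $\rho_i,\sigma_i$ ($i=0,\dots,r$) subject to $\rho_j\sigma_i=\delta_{ij}$ and $\sum_{i=0}^r\sigma_i\rho_i=1$; it is free as an abelian group. Let $G$ be Corner's countable torsion-free abelian group: a right $A$-module whose endomorphism ring is $A$ (acting by right multiplication), with $\operatorname{Hom}(G,\mathbf{Z})=0$ and $G^\ell\not\cong G^n$ for $1\le\ell<n\le r$. Let $B\subseteq H$ be countable free right $A$-modules with $H/B\cong G$, $B=\bigcup_{n\in\omega}B_n$ an increasing chain with $B_0=0$ and $H/B_n$, $B_{n+1}/B_n$ free of rank $\omega$ for all $n$. Fix for each $n$ elements $b_{n,i}\in B_{n+1}$ ($i\in\omega$) such that $\{b_{n,i}+B_n\}$ is an $A$-basis of $B_{n+1}/B_n$ (so $\{b_{n,i}\}$ is a basis of $B$). Fix a stationary set $E\subseteq\omega_1$ of limit ordinals and a tree-like ladder system $\{\eta_\delta:\delta\in E\}$: each $\eta_\delta:\omega\to\delta$ is strictly increasing with range cofinal in $\delta$ and disjoint from $E$, and $\eta_\delta(n)=\eta_\gamma(m)$ implies $m=n$ and $\eta_\delta(l)=\eta_\gamma(l)$ for all $l<n$. Define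 right $A$-modules $M_\beta$ ($\beta<\omega_1$) inductively: $M_0=0$; $M_\beta=\bigcup_{\alpha<\beta}M_\alpha$ for limit $\beta$; if $\alpha\notin E$, $M_{\alpha+1}=M_\alpha\oplus\bigoplus_{i\in\omega}x_{\alpha,i}A$ with new free generators $x_{\alpha,i}$; if $\delta\in E$, let $\iota_\delta:B\to M_\delta$ be the $A$-linear map with $b_{n,i}\mapsto x_{\eta_\delta(n),i}$ and let $M_{\delta+1}$ be the pushout of $\iota_\delta$ and the inclusion $B\hookrightarrow H$ (so $M_\delta\subseteq M_{\delta+1}$, there is an embedding $\theta_\delta:H\to M_{\delta+1}$ extending $\iota_\delta$, and $M_{\delta+1}/M_\delta\cong H/B$). Put $M=\bigcup_{\beta<\omega_1}M_\beta$. An abelian group is $\aleph_1$-separable if every countable subset lies in a countable free direct summand. $M^m$ is the direct sum of $m$ copies of $M$. A subring $A$ of a ring $R$ is algebraically closed in $R$ if every finite system of ring equations (polynomials in several noncommuting variables with coefficients from $A$) that has a solution in $R$ has a solution in $A$. *)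

theory Defs
  imports Main "HOL-Library.Countable_Set"
begin

datatype ('v, 'c) ncterm = V 'v | C 'c
  | Plus "('v, 'c) ncterm" "('v, 'c) ncterm"
  | Neg "('v, 'c) ncterm"
  | Times "('v, 'c) ncterm" "('v, 'c) ncterm"

primrec nceval :: "('r \<Rightarrow> 'r \<Rightarrow> 'r) \<Rightarrow> ('r \<Rightarrow> 'r) \<Rightarrow> ('r \<Rightarrow> 'r \<Rightarrow> 'r)
    \<Rightarrow> ('c \<Rightarrow> 'r) \<Rightarrow> ('v \<Rightarrow> 'r) \<Rightarrow> ('v, 'c) ncterm \<Rightarrow> 'r" where
  "nceval pl ng tm cst var (V v) = var v"
| "nceval pl ng tm cst var (C c) = cst c"
| "nceval pl ng tm cst var (Plus s t) = pl (nceval pl ng tm cst var s) (nceval pl ng tm cst var t)"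
| "nceval pl ng tm cst var (Neg s) = ng (nceval pl ng tm cst var s)"
| "nceval pl ng tm cst var (Times s t) = tm (nceval pl ng tm cst var s) (nceval pl ng tm cst var t)"

primrec ncvars :: "('v, 'c) ncterm \<Rightarrow> 'v set" where
  "ncvars (V v) = {v}"
| "ncvars (C c) = {}"
| "ncvars (Plus s t) = ncvars s \<union> ncvars t"
| "ncvars (Neg s) = ncvars s"
| "ncvars (Times s t) = ncvars s \<union> ncvars t"

definition ring_eval :: "('c \<Rightarrow> 'a::ring_1) \<Rightarrow> ('v \<Rightarrow> 'a) \<Rightarrow> ('v, 'c) ncterm \<Rightarrow> 'a" where
  "ring_eval cst var = nceval (+) uminus (*) cst var"

definition additive :: "('x::ab_group_add \<Rightarrow> 'y::ab_group_add) \<Rightarrow> bool" where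
  "additive f \<longleftrightarrow> (\<forall>x y. f (x + y) = f x + f y)"

definition right_module :: "('m::ab_group_add \<Rightarrow> 'a::ring_1 \<Rightarrow> 'm) \<Rightarrow> bool" where
  "right_module sm \<longleftrightarrow> (\<forall>x y a b.
      sm (x + y) a = sm x a + sm y a \<and> sm x (a + b) = sm x a + sm x b \<and>
      sm x (a * b) = sm (sm x a) b \<and> sm x 1 = x)"

definition submodule :: "('m::ab_group_add \<Rightarrow> 'a::ring_1 \<Rightarrow> 'm) \<Rightarrow> 'm set \<Rightarrow> bool" where
  "submodule sm S \<longleftrightarrow> 0 \<in> S \<and> (\<forall>x\<in>S. \<forall>y\<in>S. x + y \<in> S) \<and> (\<forall>x\<in>S. - x \<in> S)
      \<and> (\<forall>x\<in>S. \<forall>a. sm x a \<in> S)"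

definition module_hom :: "('m::ab_group_add \<Rightarrow> 'a::ring_1 \<Rightarrow> 'm) \<Rightarrow> ('n::ab_group_add \<Rightarrow> 'a \<Rightarrow> 'n)
    \<Rightarrow> ('m \<Rightarrow> 'n) \<Rightarrow> bool" where
  "module_hom sm sn f \<longleftrightarrow> additive f \<and> (\<forall>x a. f (sm x a) = sn (f x) a)"

definition lincomb :: "('m::ab_group_add \<Rightarrow> 'a::ring_1 \<Rightarrow> 'm) \<Rightarrow> (nat \<Rightarrow> 'm) \<Rightarrow> (nat \<Rightarrow> 'a) \<Rightarrow> 'm" where
  "lincomb sm e c = (\<Sum>i\<in>{i. c i \<noteq> 0}. sm (e i) (c i))"

text \<open>free_over sm X Y e: (for submodules Y \<subseteq> X) the cosets e i + Y form an A-basis of X/Y,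
  i.e. X/Y is free of rank omega with this basis.\<close>
definition free_over :: "('m::ab_group_add \<Rightarrow> 'a::ring_1 \<Rightarrow> 'm) \<Rightarrow> 'm set \<Rightarrow> 'm set \<Rightarrow> (nat \<Rightarrow> 'm) \<Rightarrow> bool" where
  "free_over sm X Y e \<longleftrightarrow> (\<forall>i. e i \<in> X) \<and>
     (\<forall>x\<in>X. \<exists>!c. finite {i. c i \<noteq> 0} \<and> x - lincomb sm e c \<in> Y)"

definition dpow :: "nat \<Rightarrow> (nat \<Rightarrow> 'x::zero) set" where
  "dpow k = {f. \<forall>i\<ge>k. f i = 0}"

definition grp_iso :: "(nat \<Rightarrow> 'x::ab_group_add) set \<Rightarrow> (nat \<Rightarrow> 'x) set \<Rightarrow> bool" where
  "grp_iso S T \<longleftrightarrow> (\<exists>\<phi>. bij_betw \<phi> S T \<and>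
     (\<forall>u\<in>S. \<forall>v\<in>S. \<phi> (\<lambda>i. u i + v i) = (\<lambda>i. \<phi> u i + \<phi> v i)))"

section \<open>The ring A_r by generators and relations\<close>

datatype gen = Rho nat | Sig nat

primrec gen_val :: "(nat \<Rightarrow> 'a) \<Rightarrow> (nat \<Rightarrow> 'a) \<Rightarrow> gen \<Rightarrow> 'a" where
  "gen_val rho sigma (Rho i) = rho i"
| "gen_val rho sigma (Sig i) = sigma i"

primrec gen_ok :: "nat \<Rightarrow> gen \<Rightarrow> bool" where
  "gen_ok r (Rho i) \<longleftrightarrow> i \<le> r"
| "gen_ok r (Sig i) \<longleftrightarrow> i \<le> r"

definition sum_rel_term :: "nat \<Rightarrow> (gen, int) ncterm" where
  "sum_rel_term r = foldr Plus (map (\<lambda>i. Times (V (Sig i)) (V (Rho i))) [0..<Suc r]) (C 0)"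

text \<open>Derivable equality in the ring presented by the generators rho_i, sigma_i and the
  relations of A_r (congruence generated by the ring axioms, integer constants and the relations).\<close>
inductive prov :: "nat \<Rightarrow> (gen, int) ncterm \<Rightarrow> (gen, int) ncterm \<Rightarrow> bool" for r where
  refl: "prov r t t"
| sym: "prov r s t \<Longrightarrow> prov r t s"
| trans: "prov r s t \<Longrightarrow> prov r t u \<Longrightarrow> prov r s u"
| cong_plus: "prov r s s' \<Longrightarrow> prov r t t' \<Longrightarrow> prov r (Plus s t) (Plus s' t')"
| cong_neg: "prov r s s' \<Longrightarrow> prov r (Neg s) (Neg s')"
| cong_times: "prov r s s' \<Longrightarrow> prov r t t' \<Longrightarrow> prov r (Times s t) (Times s' t')"
| plus_assoc: "prov r (Plus (Plus s t) u) (Plus s (Plus t u))"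
| plus_comm: "prov r (Plus s t) (Plus t s)"
| plus_zero: "prov r (Plus (C 0) t) t"
| plus_neg: "prov r (Plus t (Neg t)) (C 0)"
| times_assoc: "prov r (Times (Times s t) u) (Times s (Times t u))"
| times_one_l: "prov r (Times (C 1) t) t"
| times_one_r: "prov r (Times t (C 1)) t"
| distrib_l: "prov r (Times s (Plus t u)) (Plus (Times s t) (Times s u))"
| distrib_r: "prov r (Times (Plus s t) u) (Plus (Times s u) (Times t u))"
| const_plus: "prov r (C (k + l)) (Plus (C k) (C l))"
| const_times: "prov r (C (k * l)) (Times (C k) (C l))"
| const_neg: "prov r (C (- k)) (Neg (C k))"
| rel_rho_sigma: "i \<le> r \<Longrightarrow> j \<le> r \<Longrightarrow>
     prov r (Times (V (Rho j)) (V (Sig i))) (C (if i = j then 1 else 0))"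
| rel_sum: "prov r (sum_rel_term r) (C 1)"

text \<open>(A, rho, sigma) is the ring A_r: the relations hold, A is generated by the rho_i, sigma_i,
  and every equality between such expressions in A is a consequence of the ring axioms and
  the defining relations (i.e. A is the ring freely generated subject to the relations).\<close>
definition is_Ar :: "nat \<Rightarrow> (nat \<Rightarrow> 'a::ring_1) \<Rightarrow> (nat \<Rightarrow> 'a) \<Rightarrow> bool" where
  "is_Ar r rho sigma \<longleftrightarrow>
     (\<forall>i\<le>r. \<forall>j\<le>r. rho j * sigma i = (if i = j then 1 else 0)) \<and>
     (\<Sum>i\<le>r. sigma i * rho i) = 1 \<and>
     (\<forall>a::'a. \<exists>t. (\<forall>g\<in>ncvars t. gen_ok r g) \<and> ring_eval of_int (gen_val rho sigma) t = a) \<and>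
     (\<forall>s t. (\<forall>g\<in>ncvars s. gen_ok r g) \<longrightarrow> (\<forall>g\<in>ncvars t. gen_ok r g) \<longrightarrow>
        ring_eval of_int (gen_val rho sigma) s = ring_eval of_int (gen_val rho sigma) t \<longrightarrow>
        prov r s t)"

definition corner_group :: "nat \<Rightarrow> ('g::ab_group_add \<Rightarrow> 'a::ring_1 \<Rightarrow> 'g) \<Rightarrow> bool" where
  "corner_group r sm \<longleftrightarrow> right_module sm \<and> countable (UNIV :: 'g set) \<and>
     (\<forall>n::nat. \<forall>g::'g. 0 < n \<longrightarrow> (\<Sum>_<n. g) = 0 \<longrightarrow> g = 0) \<and>
     (\<forall>f::'g \<Rightarrow> 'g. additive f \<longrightarrow> (\<exists>!a. f = (\<lambda>g. sm g a))) \<and>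
     (\<forall>f::'g \<Rightarrow> int. additive f \<longrightarrow> (\<forall>g. f g = 0)) \<and>
     (\<forall>l n. 1 \<le> l \<longrightarrow> l < n \<longrightarrow> n \<le> r \<longrightarrow>
        \<not> grp_iso (dpow l :: (nat \<Rightarrow> 'g) set) (dpow n))"

section \<open>The modules B \<subseteq> H\<close>

definition HB_data :: "('h::ab_group_add \<Rightarrow> 'a::ring_1 \<Rightarrow> 'h) \<Rightarrow> (nat \<Rightarrow> 'h set)
    \<Rightarrow> (nat \<Rightarrow> nat \<Rightarrow> 'h) \<Rightarrow> bool" where
  "HB_data sm Bn b \<longleftrightarrow> right_module sm \<and>
     (\<forall>n. submodule sm (Bn n)) \<and> Bn 0 = {0} \<and> (\<forall>n. Bn n \<subseteq> Bn (Suc n)) \<and>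
     (\<forall>n. \<exists>e. free_over sm UNIV (Bn n) e) \<and>
     (\<forall>n. free_over sm (Bn (Suc n)) (Bn n) (b n))"

text \<open>The index type 'i is (order-isomorphic to) omega_1.\<close>
definition omega1_type :: "'i::wellorder itself \<Rightarrow> bool" where
  "omega1_type _ \<longleftrightarrow> \<not> countable (UNIV :: 'i set) \<and> (\<forall>a::'i. countable {..<a})"

definition ord_zero :: "'i::wellorder" where
  "ord_zero = (LEAST x. True)"

definition ord_succ :: "'i::wellorder \<Rightarrow> 'i" where
  "ord_succ a = (LEAST b. a < b)"

definition is_limit :: "'i::wellorder \<Rightarrow> bool" where
  "is_limit d \<longleftrightarrow> d \<noteq> ord_zero \<and> (\<forall>a<d. \<exists>b. a < b \<and> b < d)"

definition club :: "'i::wellorder set \<Rightarrow> bool" where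
  "club S \<longleftrightarrow> (\<forall>a. \<exists>b\<in>S. a < b) \<and>
     (\<forall>d. is_limit d \<longrightarrow> (\<forall>a<d. \<exists>b\<in>S. a < b \<and> b < d) \<longrightarrow> d \<in> S)"

definition stationary :: "'i::wellorder set \<Rightarrow> bool" where
  "stationary E \<longleftrightarrow> (\<forall>S. club S \<longrightarrow> E \<inter> S \<noteq> {})"

definition ladder_system :: "'i::wellorder set \<Rightarrow> ('i \<Rightarrow> nat \<Rightarrow> 'i) \<Rightarrow> bool" where
  "ladder_system E eta \<longleftrightarrow>
     (\<forall>d\<in>E. strict_mono (eta d) \<and> (\<forall>n. eta d n < d) \<and> (\<forall>a<d. \<exists>n. a < eta d n)
        \<and> (\<forall>n. eta d n \<notin> E)) \<and>
     (\<forall>d\<in>E. \<forall>g\<in>E. \<forall>n m. eta d n = eta g m \<longrightarrow> m = n \<and> (\<forall>l<n. eta d l = eta g l))"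

text \<open>Mf is the filtration (M_beta), x the free generators x_(alpha,i), th the maps theta_delta.
  The condition at delta in E says exactly that M_(delta+1) is the pushout of iota_delta and the
  inclusion B \<subseteq> H: theta_delta is A-linear, extends iota_delta (b_(n,i) \<mapsto> x_(eta_delta(n),i)),
  M_(delta+1) = M_delta + theta_delta(H), and theta_delta(h) \<in> M_delta iff h \<in> B.\<close>
definition M_construction :: "('h::ab_group_add \<Rightarrow> 'a::ring_1 \<Rightarrow> 'h) \<Rightarrow> 'h set \<Rightarrow> (nat \<Rightarrow> nat \<Rightarrow> 'h)
    \<Rightarrow> 'i::wellorder set \<Rightarrow> ('i \<Rightarrow> nat \<Rightarrow> 'i) \<Rightarrow> ('m::ab_group_add \<Rightarrow> 'a \<Rightarrow> 'm)
    \<Rightarrow> ('i \<Rightarrow> 'm set) \<Rightarrow> ('i \<Rightarrow> nat \<Rightarrow> 'm) \<Rightarrow> ('i \<Rightarrow> 'h \<Rightarrow> 'm) \<Rightarrow> bool" where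
  "M_construction smH B b E eta smM Mf x th \<longleftrightarrow>
     (\<forall>be. submodule smM (Mf be)) \<and>
     Mf ord_zero = {0} \<and>
     (\<forall>be. is_limit be \<longrightarrow> Mf be = (\<Union>a\<in>{..<be}. Mf a)) \<and>
     (\<forall>a. a \<notin> E \<longrightarrow> Mf a \<subseteq> Mf (ord_succ a) \<and> free_over smM (Mf (ord_succ a)) (Mf a) (x a)) \<and>
     (\<forall>d\<in>E. module_hom smH smM (th d) \<and>
        (\<forall>n i. th d (b n i) = x (eta d n) i) \<and>
        Mf (ord_succ d) = {m + th d h | m h. m \<in> Mf d} \<and>
        (\<forall>h. th d h \<in> Mf d \<longleftrightarrow> h \<in> B)) \<and>
     (\<Union>be. Mf be) = UNIV"

text \<open>End(M) with endomorphisms written on the right (as for right modules): the product f g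
  means first f, then g.  a \<in> A acts as right multiplication.\<close>
definition end_eval :: "('m::ab_group_add \<Rightarrow> 'a::ring_1 \<Rightarrow> 'm) \<Rightarrow> ('v \<Rightarrow> ('m \<Rightarrow> 'm))
    \<Rightarrow> ('v, 'a) ncterm \<Rightarrow> ('m \<Rightarrow> 'm)" where
  "end_eval sm F = nceval (\<lambda>f g m. f m + g m) (\<lambda>f m. - f m) (\<lambda>f g. g \<circ> f)
      (\<lambda>a m. sm m a) F"

definition alg_closed_in_End :: "('m::ab_group_add \<Rightarrow> 'a::ring_1 \<Rightarrow> 'm) \<Rightarrow> bool" where
  "alg_closed_in_End sm \<longleftrightarrow>
     (\<forall>ps :: (nat, 'a) ncterm list.
        (\<exists>F. (\<forall>v. additive (F v)) \<and> (\<forall>p\<in>set ps. end_eval sm F p = (\<lambda>_. 0))) \<longrightarrow>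
        (\<exists>s. \<forall>p\<in>set ps. ring_eval id s p = 0))"

end

theory Submission
  imports Defs
begin

(*
  The relations of A = A_r say that the row (sigma_0, ..., sigma_r) and the column
  (rho_0, ..., rho_r) are mutually inverse matrices, so A is isomorphic to A^(r+1) as a right
  A-module and N^n is isomorphic to N^(n+r) for every right A-module N; this gives "if".
  Conversely, an isomorphism between M^m and M^k is a pair of mutually inverse m x k and k x m
  matrices over End(M).  Their entries solve a finite system of ring equations with coefficients
  in A, so by algebraic closedness there are such matrices over A.  These induce an isomorphism
  between G^m and G^k for Corner's group G.  Moving m and k into {1, ..., r} by means of
  G^n = G^(n+r), Corner's non-isomorphisms G^l =/= G^n for 1 <= l < n <= r force m = k mod r.
  Only the module structure of M and the closedness of A in End(M) are used.
*)

definition additive_on :: "(nat \<Rightarrow> 'x::ab_group_add) set \<Rightarrow> ((nat \<Rightarrow> 'x) \<Rightarrow> nat \<Rightarrow> 'y::ab_group_add) \<Rightarrow> bool"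
  where "additive_on S \<phi> \<longleftrightarrow> (\<forall>u\<in>S. \<forall>v\<in>S. \<phi> (\<lambda>i. u i + v i) = (\<lambda>i. \<phi> u i + \<phi> v i))"

lemma grp_iso_iff_additive_on: "grp_iso S T \<longleftrightarrow> (\<exists>\<phi>. bij_betw \<phi> S T \<and> additive_on S \<phi>)"
  by (simp add: grp_iso_def additive_on_def)

lemma dpow_add:
  fixes u v :: "nat \<Rightarrow> 'x::monoid_add"
  shows "u \<in> dpow n \<Longrightarrow> v \<in> dpow n \<Longrightarrow> (\<lambda>i. u i + v i) \<in> dpow n"
  by (simp add: dpow_def)

lemma dpow_sum: "(\<And>j. j \<in> S \<Longrightarrow> u j \<in> dpow n) \<Longrightarrow> (\<lambda>l. \<Sum>j\<in>S. u j l) \<in> dpow n"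
  by (simp add: dpow_def)

lemma additive_on_zero:
  assumes "additive_on S \<phi>" and "(\<lambda>i. 0) \<in> S"
  shows "\<phi> (\<lambda>i. 0) = (\<lambda>i. 0)"
proof -
  have "\<phi> (\<lambda>i. 0 + 0) = (\<lambda>i. \<phi> (\<lambda>i. 0) i + \<phi> (\<lambda>i. 0) i)"
    using assms(1)[unfolded additive_on_def, rule_format, OF assms(2) assms(2)] .
  then show ?thesis by (simp add: fun_eq_iff)
qed

lemma additive_on_sum:
  assumes add: "additive_on (dpow n) \<phi>" and "finite S" and "\<And>j. j \<in> S \<Longrightarrow> u j \<in> dpow n"
  shows "\<phi> (\<lambda>l. \<Sum>j\<in>S. u j l) = (\<lambda>l. \<Sum>j\<in>S. \<phi> (u j) l)"
  using assms(2,3)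
proof (induction S rule: finite_induct)
  case empty
  then show ?case using additive_on_zero[OF add] by (simp add: dpow_def)
next
  case (insert j S)
  then have "u j \<in> dpow n" and "(\<lambda>l. \<Sum>j\<in>S. u j l) \<in> dpow n"
    by (auto intro: dpow_sum)
  with insert add show ?case by (simp add: additive_on_def)
qed

lemma additive_on_inv_into:
  assumes bij: "bij_betw \<phi> S T" and add: "additive_on S \<phi>"
    and closed: "\<And>u v. u \<in> S \<Longrightarrow> v \<in> S \<Longrightarrow> (\<lambda>i. u i + v i) \<in> S"
  shows "additive_on T (inv_into S \<phi>)"
  unfolding additive_on_def
proof (intro ballI)
  fix u v assume u: "u \<in> T" and v: "v \<in> T"
  let ?\<psi> = "inv_into S \<phi>"
  have \<psi>u: "?\<psi> u \<in> S" and \<psi>v: "?\<psi> v \<in> S"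
    using bij_betw_apply[OF bij_betw_inv_into[OF bij]] u v by auto
  have "(\<lambda>i. u i + v i) = \<phi> (\<lambda>i. ?\<psi> u i + ?\<psi> v i)"
    using add \<psi>u \<psi>v u v bij by (simp add: additive_on_def bij_betw_inv_into_right)
  then show "?\<psi> (\<lambda>i. u i + v i) = (\<lambda>i. ?\<psi> u i + ?\<psi> v i)"
    using inv_into_f_f[OF bij_betw_imp_inj_on[OF bij] closed[OF \<psi>u \<psi>v]] by simp
qed

lemma grp_iso_refl: "grp_iso S S"
  unfolding grp_iso_iff_additive_on additive_on_def by (intro exI[of _ id]) simp

lemma grp_iso_dpow_sym:
  assumes "grp_iso (dpow m :: (nat \<Rightarrow> 'x::ab_group_add) set) (dpow k)"
  shows "grp_iso (dpow k :: (nat \<Rightarrow> 'x) set) (dpow m)"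
proof -
  obtain \<phi> :: "(nat \<Rightarrow> 'x) \<Rightarrow> nat \<Rightarrow> 'x"
    where bij: "bij_betw \<phi> (dpow m) (dpow k)" and add: "additive_on (dpow m) \<phi>"
    using assms unfolding grp_iso_iff_additive_on by blast
  show ?thesis
    unfolding grp_iso_iff_additive_on
    using bij_betw_inv_into[OF bij] additive_on_inv_into[OF bij add dpow_add] by blast
qed

lemma grp_iso_trans:
  assumes "grp_iso S T" and "grp_iso T U"
  shows "grp_iso S U"
proof -
  obtain \<phi> \<psi> where \<phi>: "bij_betw \<phi> S T" "additive_on S \<phi>" and \<psi>: "bij_betw \<psi> T U" "additive_on T \<psi>"
    using assms unfolding grp_iso_iff_additive_on by blast
  have "bij_betw (\<psi> \<circ> \<phi>) S U"
    using \<phi>(1) \<psi>(1) by (rule bij_betw_trans)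
  moreover have "additive_on S (\<psi> \<circ> \<phi>)"
    using \<phi> \<psi> by (simp add: additive_on_def bij_betw_apply)
  ultimately show ?thesis
    unfolding grp_iso_iff_additive_on by blast
qed

lemma right_module_zero_scalar: "right_module sm \<Longrightarrow> sm x 0 = 0"
  unfolding right_module_def by (metis add_cancel_right_right add.right_neutral)

lemma right_module_zero_elem: "right_module sm \<Longrightarrow> sm 0 a = 0"
  unfolding right_module_def by (metis add_cancel_right_right add.right_neutral)

lemma right_module_sum_elem:
  "right_module sm \<Longrightarrow> sm (\<Sum>i\<in>S. f i) a = (\<Sum>i\<in>S. sm (f i) a)"
  by (induction S rule: infinite_finite_induct)
    (simp_all add: right_module_zero_elem right_module_def)

lemma right_module_sum_scalar:
  "right_module sm \<Longrightarrow> sm x (\<Sum>i\<in>S. f i) = (\<Sum>i\<in>S. sm x (f i))"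
  by (induction S rule: infinite_finite_induct)
    (simp_all add: right_module_zero_scalar right_module_def)

lemma right_module_mult: "right_module sm \<Longrightarrow> sm (sm x a) b = sm x (a * b)"
  unfolding right_module_def by metis

lemma right_module_one: "right_module sm \<Longrightarrow> sm x 1 = x"
  unfolding right_module_def by metis

section \<open>Matrices over the scalar ring acting on direct powers\<close>

definition mat_prod_is_id :: "nat \<Rightarrow> nat \<Rightarrow> (nat \<Rightarrow> nat \<Rightarrow> 'a::ring_1) \<Rightarrow> (nat \<Rightarrow> nat \<Rightarrow> 'a) \<Rightarrow> bool"
  where "mat_prod_is_id m k P Q \<longleftrightarrow>
    (\<forall>i<m. \<forall>i'<m. (\<Sum>j<k. P i j * Q j i') = (if i = i' then 1 else 0))"

definition mat_act :: "('x::ab_group_add \<Rightarrow> 'a::ring_1 \<Rightarrow> 'x) \<Rightarrow> nat \<Rightarrow> nat \<Rightarrow> (nat \<Rightarrow> nat \<Rightarrow> 'a)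
    \<Rightarrow> (nat \<Rightarrow> 'x) \<Rightarrow> nat \<Rightarrow> 'x"
  where "mat_act sm m k P u = (\<lambda>j. if j < k then \<Sum>i<m. sm (u i) (P i j) else 0)"

lemma mat_act_in_dpow: "mat_act sm m k P u \<in> dpow k"
  by (simp add: mat_act_def dpow_def)

lemma additive_on_mat_act: "right_module sm \<Longrightarrow> additive_on S (mat_act sm m k P)"
  by (auto simp: additive_on_def mat_act_def right_module_def sum.distrib fun_eq_iff)

lemma mat_act_mat_act:
  assumes sm: "right_module sm" and PQ: "mat_prod_is_id m k P Q" and u: "u \<in> dpow m"
  shows "mat_act sm k m Q (mat_act sm m k P u) = u"
proof
  fix i'
  show "mat_act sm k m Q (mat_act sm m k P u) i' = u i'"
  proof (cases "i' < m")
    case False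
    then show ?thesis using u by (simp add: mat_act_def dpow_def)
  next
    case True
    have "mat_act sm k m Q (mat_act sm m k P u) i' = (\<Sum>j<k. \<Sum>i<m. sm (u i) (P i j * Q j i'))"
      using True by (simp add: mat_act_def right_module_sum_elem[OF sm] right_module_mult[OF sm])
    also have "\<dots> = (\<Sum>i<m. sm (u i) (\<Sum>j<k. P i j * Q j i'))"
      by (simp add: sum.swap[of _ "{..<k}"] right_module_sum_scalar[OF sm])
    also have "\<dots> = (\<Sum>i<m. if i = i' then u i else 0)"
      using PQ True
      by (intro sum.cong) (simp_all add: mat_prod_is_id_def right_module_one[OF sm] right_module_zero_scalar[OF sm])
    also have "\<dots> = u i'"
      using True by simp
    finally show ?thesis .
  qed
qed

lemma grp_iso_dpow_if_inverse_matrices: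
  fixes sm :: "'x::ab_group_add \<Rightarrow> 'a::ring_1 \<Rightarrow> 'x" and P Q :: "nat \<Rightarrow> nat \<Rightarrow> 'a"
  assumes sm: "right_module sm" and "mat_prod_is_id m k P Q" and "mat_prod_is_id k m Q P"
  shows "grp_iso (dpow m :: (nat \<Rightarrow> 'x) set) (dpow k)"
proof -
  have "bij_betw (mat_act sm m k P) (dpow m) (dpow k)"
    using assms mat_act_mat_act[OF sm] mat_act_in_dpow
    by (intro bij_betw_byWitness[where f' = "mat_act sm k m Q"]) auto
  then show ?thesis
    unfolding grp_iso_iff_additive_on using additive_on_mat_act[OF sm] by blast
qed

text \<open>These are the relations of the Leavitt algebra of type (1, r + 1), which is A_r.\<close>

definition leavitt_relations :: "nat \<Rightarrow> (nat \<Rightarrow> 'a::ring_1) \<Rightarrow> (nat \<Rightarrow> 'a) \<Rightarrow> bool"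
  where "leavitt_relations r rho sigma \<longleftrightarrow>
    (\<forall>i\<le>r. \<forall>j\<le>r. rho j * sigma i = (if i = j then 1 else 0)) \<and> (\<Sum>i\<le>r. sigma i * rho i) = 1"

text \<open>The row (sigma_0, ..., sigma_r) and the column (rho_0, ..., rho_r), each enlarged by an
  identity block of size n - 1.\<close>

definition expand_mat :: "nat \<Rightarrow> (nat \<Rightarrow> 'a::ring_1) \<Rightarrow> nat \<Rightarrow> nat \<Rightarrow> 'a"
  where "expand_mat r sigma i j =
    (if i = 0 then if j \<le> r then sigma j else 0 else if j = i + r then 1 else 0)"

definition contract_mat :: "nat \<Rightarrow> (nat \<Rightarrow> 'a::ring_1) \<Rightarrow> nat \<Rightarrow> nat \<Rightarrow> 'a"
  where "contract_mat r rho j i =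
    (if j \<le> r then if i = 0 then rho j else 0 else if j = i + r then 1 else 0)"

lemma mat_prod_is_id_expand_contract:
  assumes L: "leavitt_relations r rho sigma" and n: "0 < n"
  shows "mat_prod_is_id n (n + r) (expand_mat r sigma) (contract_mat r rho)"
  unfolding mat_prod_is_id_def
proof (intro allI impI)
  fix i i' assume i: "i < n" and i': "i' < n"
  show "(\<Sum>j<n + r. expand_mat r sigma i j * contract_mat r rho j i') = (if i = i' then 1 else 0)"
  proof (cases "i = 0")
    case True
    have "(\<Sum>j<n + r. expand_mat r sigma i j * contract_mat r rho j i')
        = (\<Sum>j\<in>{..<n + r} \<inter> {..r}. if i' = 0 then sigma j * rho j else 0)"
      unfolding sum.inter_restrict[OF finite_lessThan]
      by (intro sum.cong) (auto simp: expand_mat_def contract_mat_def True)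
    also have "{..<n + r} \<inter> {..r} = {..r}"
      using n by auto
    finally show ?thesis
      using L True by (simp add: leavitt_relations_def)
  next
    case False
    have "(\<Sum>j<n + r. expand_mat r sigma i j * contract_mat r rho j i')
        = (\<Sum>j<n + r. if j = i + r then (if i = i' then 1 else 0) else 0)"
      using False by (intro sum.cong) (auto simp: expand_mat_def contract_mat_def)
    then show ?thesis
      using i by simp
  qed
qed

lemma mat_prod_is_id_contract_expand:
  assumes L: "leavitt_relations r rho sigma" and n: "0 < n"
  shows "mat_prod_is_id (n + r) n (contract_mat r rho) (expand_mat r sigma)"
  unfolding mat_prod_is_id_def
proof (intro allI impI)
  fix j j' assume j: "j < n + r" and j': "j' < n + r"
  show "(\<Sum>i<n. contract_mat r rho j i * expand_mat r sigma i j') = (if j = j' then 1 else 0)"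
  proof (cases "j \<le> r")
    case True
    have "(\<Sum>i<n. contract_mat r rho j i * expand_mat r sigma i j')
        = (\<Sum>i<n. if i = 0 then (if j = j' then 1 else 0) else 0)"
      using True L by (intro sum.cong) (auto simp: expand_mat_def contract_mat_def leavitt_relations_def)
    then show ?thesis
      using n by simp
  next
    case False
    have "(\<Sum>i<n. contract_mat r rho j i * expand_mat r sigma i j')
        = (\<Sum>i<n. if i = j - r then (if j = j' then 1 else 0) else 0)"
      using False by (intro sum.cong) (auto simp: expand_mat_def contract_mat_def)
    then show ?thesis
      using j False by (simp add: less_diff_conv2)
  qed
qed

lemma grp_iso_dpow_add:
  fixes sm :: "'x::ab_group_add \<Rightarrow> 'a::ring_1 \<Rightarrow> 'x" and rho sigma :: "nat \<Rightarrow> 'a"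
  assumes "right_module sm" and "leavitt_relations r rho sigma" and "0 < n"
  shows "grp_iso (dpow n :: (nat \<Rightarrow> 'x) set) (dpow (n + r))"
  using grp_iso_dpow_if_inverse_matrices[OF assms(1) mat_prod_is_id_expand_contract[OF assms(2,3)]
      mat_prod_is_id_contract_expand[OF assms(2,3)]] .

lemma grp_iso_dpow_add_mult:
  fixes sm :: "'x::ab_group_add \<Rightarrow> 'a::ring_1 \<Rightarrow> 'x" and rho sigma :: "nat \<Rightarrow> 'a"
  assumes sm: "right_module sm" and L: "leavitt_relations r rho sigma" and n: "0 < n"
  shows "grp_iso (dpow n :: (nat \<Rightarrow> 'x) set) (dpow (n + t * r))"
proof (induction t)
  case 0
  then show ?case by (simp add: grp_iso_refl)
next
  case (Suc t)
  have iso: "grp_iso (dpow (n + t * r) :: (nat \<Rightarrow> 'x) set) (dpow (n + t * r + r))"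
    using n by (intro grp_iso_dpow_add[OF sm L]) simp
  have "n + Suc t * r = n + t * r + r"
    by simp
  then show ?case
    using grp_iso_trans[OF Suc.IH iso] by (simp only:)
qed

lemma grp_iso_dpow_if_mod_eq:
  fixes sm :: "'x::ab_group_add \<Rightarrow> 'a::ring_1 \<Rightarrow> 'x" and rho sigma :: "nat \<Rightarrow> 'a"
  assumes sm: "right_module sm" and L: "leavitt_relations r rho sigma"
    and "0 < m" and "0 < k" and "m mod r = k mod r"
  shows "grp_iso (dpow m :: (nat \<Rightarrow> 'x) set) (dpow k)"
proof -
  have le: "grp_iso (dpow a :: (nat \<Rightarrow> 'x) set) (dpow b)"
    if "0 < a" "a \<le> b" "a mod r = b mod r" for a b
  proof -
    have "r dvd b - a"
      using mod_eq_dvd_iff_nat[OF that(2), of r] that(3) by simp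
    then obtain t where "b - a = r * t" ..
    then have "b = a + t * r"
      using \<open>a \<le> b\<close> by (simp add: mult.commute)
    then show ?thesis
      using grp_iso_dpow_add_mult[OF sm L \<open>0 < a\<close>] by simp
  qed
  show ?thesis
  proof (cases "m \<le> k")
    case True
    then show ?thesis using le assms by blast
  next
    case False
    then show ?thesis using le[of k m] assms grp_iso_dpow_sym by simp
  qed
qed

lemma mod_eq_if_grp_iso_dpow:
  fixes sm :: "'x::ab_group_add \<Rightarrow> 'a::ring_1 \<Rightarrow> 'x" and rho sigma :: "nat \<Rightarrow> 'a"
  assumes sm: "right_module sm" and L: "leavitt_relations r rho sigma" and r: "0 < r"
    and distinct: "\<forall>l n. 1 \<le> l \<longrightarrow> l < n \<longrightarrow> n \<le> r \<longrightarrow> \<not> grp_iso (dpow l :: (nat \<Rightarrow> 'x) set) (dpow n)"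
    and "0 < m" and "0 < k" and iso: "grp_iso (dpow m :: (nat \<Rightarrow> 'x) set) (dpow k)"
  shows "m mod r = k mod r"
proof -
  define m' k' where "m' = (m - 1) mod r + 1" and "k' = (k - 1) mod r + 1"
  have bounds: "1 \<le> m'" "m' \<le> r" "1 \<le> k'" "k' \<le> r"
    using r by (simp_all add: m'_def k'_def Suc_le_eq)
  have mods: "m mod r = m' mod r" "k mod r = k' mod r"
    using \<open>0 < m\<close> \<open>0 < k\<close> by (simp_all add: m'_def k'_def mod_Suc_eq)
  have "grp_iso (dpow m' :: (nat \<Rightarrow> 'x) set) (dpow m)" "grp_iso (dpow k :: (nat \<Rightarrow> 'x) set) (dpow k')"
    using bounds mods \<open>0 < m\<close> \<open>0 < k\<close> by (auto intro: grp_iso_dpow_if_mod_eq[OF sm L])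
  then have "grp_iso (dpow m' :: (nat \<Rightarrow> 'x) set) (dpow k')"
    using grp_iso_trans iso by blast
  then have "m' = k'"
    using bounds distinct grp_iso_dpow_sym by (metis linorder_neqE_nat)
  then show ?thesis
    using mods by simp
qed

section \<open>Isomorphisms of direct powers as matrices over the endomorphism ring\<close>

definition dsum_inj :: "nat \<Rightarrow> 'x::zero \<Rightarrow> nat \<Rightarrow> 'x"
  where "dsum_inj i x = (\<lambda>l. if l = i then x else 0)"

lemma dsum_inj_in_dpow: "i < n \<Longrightarrow> dsum_inj i x \<in> dpow n"
  by (simp add: dsum_inj_def dpow_def)

lemma dpow_eq_sum_dsum_inj: "u \<in> dpow n \<Longrightarrow> u = (\<lambda>l. \<Sum>j<n. dsum_inj j (u j) l)"
  by (auto simp: dsum_inj_def dpow_def fun_eq_iff not_less)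

lemma additive_dsum_inj_component:
  fixes \<phi> :: "(nat \<Rightarrow> 'x::ab_group_add) \<Rightarrow> nat \<Rightarrow> 'y::ab_group_add"
  assumes "additive_on (dpow m) \<phi>" and "i < m"
  shows "additive (\<lambda>x. \<phi> (dsum_inj i x) j)"
  unfolding additive_def
proof (intro allI)
  fix x y :: 'x
  have "dsum_inj i (x + y) = (\<lambda>l. dsum_inj i x l + dsum_inj i y l)"
    by (simp add: dsum_inj_def fun_eq_iff)
  moreover have "\<phi> (\<lambda>l. dsum_inj i x l + dsum_inj i y l) = (\<lambda>l. \<phi> (dsum_inj i x) l + \<phi> (dsum_inj i y) l)"
    using assms(1)[unfolded additive_on_def, rule_format, OF dsum_inj_in_dpow[OF assms(2)] dsum_inj_in_dpow[OF assms(2)]] .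
  ultimately show "\<phi> (dsum_inj i (x + y)) j = \<phi> (dsum_inj i x) j + \<phi> (dsum_inj i y) j"
    by simp
qed

text \<open>Endomorphisms compose as in end_eval (first F i j, then G j i'), so this is the matrix
  identity F G = 1 over End(M).\<close>

definition end_mat_prod_is_id :: "nat \<Rightarrow> nat \<Rightarrow> (nat \<Rightarrow> nat \<Rightarrow> 'x \<Rightarrow> 'y)
    \<Rightarrow> (nat \<Rightarrow> nat \<Rightarrow> 'y \<Rightarrow> 'x::ab_group_add) \<Rightarrow> bool"
  where "end_mat_prod_is_id m k F G \<longleftrightarrow>
    (\<forall>i<m. \<forall>i'<m. \<forall>x. (\<Sum>j<k. G j i' (F i j x)) = (if i = i' then x else 0))"

lemma end_mat_prod_is_id_components:
  fixes \<phi> :: "(nat \<Rightarrow> 'x::ab_group_add) \<Rightarrow> nat \<Rightarrow> 'y::ab_group_add"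
    and \<psi> :: "(nat \<Rightarrow> 'y) \<Rightarrow> nat \<Rightarrow> 'x"
  assumes \<psi>: "additive_on (dpow k) \<psi>" and \<phi>: "\<And>u. u \<in> dpow m \<Longrightarrow> \<phi> u \<in> dpow k"
    and \<psi>\<phi>: "\<And>u. u \<in> dpow m \<Longrightarrow> \<psi> (\<phi> u) = u"
  shows "end_mat_prod_is_id m k (\<lambda>i j x. \<phi> (dsum_inj i x) j) (\<lambda>j i y. \<psi> (dsum_inj j y) i)"
  unfolding end_mat_prod_is_id_def
proof (intro allI impI)
  fix i i' x assume i: "i < m"
  have "(\<lambda>l. \<Sum>j<k. \<psi> (dsum_inj j (\<phi> (dsum_inj i x) j)) l)
      = \<psi> (\<lambda>l. \<Sum>j<k. dsum_inj j (\<phi> (dsum_inj i x) j) l)"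
    by (rule additive_on_sum[OF \<psi>, symmetric]) (simp_all add: dsum_inj_in_dpow)
  also have "\<dots> = \<psi> (\<phi> (dsum_inj i x))"
    using dpow_eq_sum_dsum_inj[OF \<phi>[OF dsum_inj_in_dpow[OF i]]] by simp
  also have "\<dots> = dsum_inj i x"
    by (rule \<psi>\<phi>[OF dsum_inj_in_dpow[OF i]])
  finally show "(\<Sum>j<k. \<psi> (dsum_inj j (\<phi> (dsum_inj i x) j)) i') = (if i = i' then x else 0)"
    by (auto simp: fun_eq_iff dsum_inj_def)
qed

lemma grp_iso_dpow_end_matrices:
  fixes m k :: nat
  assumes "grp_iso (dpow m :: (nat \<Rightarrow> 'x) set) (dpow k)"
  obtains F G :: "nat \<Rightarrow> nat \<Rightarrow> 'x::ab_group_add \<Rightarrow> 'x"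
  where "\<And>i j. additive (F i j)" and "\<And>j i. additive (G j i)"
    and "end_mat_prod_is_id m k F G" and "end_mat_prod_is_id k m G F"
proof -
  obtain \<phi> :: "(nat \<Rightarrow> 'x) \<Rightarrow> nat \<Rightarrow> 'x"
    where bij: "bij_betw \<phi> (dpow m) (dpow k)" and \<phi>: "additive_on (dpow m) \<phi>"
    using assms unfolding grp_iso_iff_additive_on by blast
  define \<psi> where "\<psi> = inv_into (dpow m) \<phi>"
  have \<psi>: "additive_on (dpow k) \<psi>"
    unfolding \<psi>_def using bij \<phi> dpow_add by (rule additive_on_inv_into)
  define F where "F i j = (if i < m then (\<lambda>x. \<phi> (dsum_inj i x) j) else (\<lambda>_. 0))" for i j
  define G where "G j i = (if j < k then (\<lambda>y. \<psi> (dsum_inj j y) i) else (\<lambda>_. 0))" for j i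
  show thesis
  proof
    show "additive (F i j)" "additive (G j i)" for i j
      using additive_dsum_inj_component[OF \<phi>] additive_dsum_inj_component[OF \<psi>]
      by (simp_all add: F_def G_def additive_def)
    have "end_mat_prod_is_id m k (\<lambda>i j x. \<phi> (dsum_inj i x) j) (\<lambda>j i y. \<psi> (dsum_inj j y) i)"
      using \<psi> bij_betw_apply[OF bij] inv_into_f_f[OF bij_betw_imp_inj_on[OF bij]]
      by (intro end_mat_prod_is_id_components) (simp_all add: \<psi>_def)
    then show "end_mat_prod_is_id m k F G"
      by (simp add: end_mat_prod_is_id_def F_def G_def)
    have "end_mat_prod_is_id k m (\<lambda>j i y. \<psi> (dsum_inj j y) i) (\<lambda>i j x. \<phi> (dsum_inj i x) j)"
      using \<phi> bij_betw_apply[OF bij_betw_inv_into[OF bij]] bij_betw_inv_into_right[OF bij]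
      by (intro end_mat_prod_is_id_components) (simp_all add: \<psi>_def)
    then show "end_mat_prod_is_id k m G F"
      by (simp add: end_mat_prod_is_id_def F_def G_def)
  qed
qed

section \<open>Matrix identities as ring equations\<close>

primrec sum_term :: "nat \<Rightarrow> (nat \<Rightarrow> ('v, 'c::zero) ncterm) \<Rightarrow> ('v, 'c) ncterm" where
  "sum_term 0 f = C 0"
| "sum_term (Suc k) f = Plus (sum_term k f) (f k)"

definition mat_prod_id_term :: "nat \<Rightarrow> (nat \<Rightarrow> nat \<Rightarrow> 'v) \<Rightarrow> (nat \<Rightarrow> nat \<Rightarrow> 'v) \<Rightarrow> nat \<Rightarrow> nat
    \<Rightarrow> ('v, 'c::{zero,one}) ncterm"
  where "mat_prod_id_term k X Y i i' =
    Plus (sum_term k (\<lambda>j. Times (V (X i j)) (V (Y j i')))) (Neg (C (if i = i' then 1 else 0)))"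

definition mat_prod_id_terms :: "nat \<Rightarrow> nat \<Rightarrow> (nat \<Rightarrow> nat \<Rightarrow> 'v) \<Rightarrow> (nat \<Rightarrow> nat \<Rightarrow> 'v)
    \<Rightarrow> ('v, 'c::{zero,one}) ncterm list"
  where "mat_prod_id_terms m k X Y = concat (map (\<lambda>i. map (mat_prod_id_term k X Y i) [0..<m]) [0..<m])"

lemma ball_set_mat_prod_id_terms:
  "(\<forall>p\<in>set (mat_prod_id_terms m k X Y). P p) \<longleftrightarrow> (\<forall>i<m. \<forall>i'<m. P (mat_prod_id_term k X Y i i'))"
  by (auto simp: mat_prod_id_terms_def)

lemma ring_eval_simps [simp]:
  "ring_eval cst s (V v) = s v"
  "ring_eval cst s (C a) = cst a"
  "ring_eval cst s (Plus p q) = ring_eval cst s p + ring_eval cst s q"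
  "ring_eval cst s (Neg p) = - ring_eval cst s p"
  "ring_eval cst s (Times p q) = ring_eval cst s p * ring_eval cst s q"
  by (simp_all add: ring_eval_def)

lemma end_eval_simps [simp]:
  "end_eval sm F (V v) = F v"
  "end_eval sm F (C a) = (\<lambda>x. sm x a)"
  "end_eval sm F (Plus p q) = (\<lambda>x. end_eval sm F p x + end_eval sm F q x)"
  "end_eval sm F (Neg p) = (\<lambda>x. - end_eval sm F p x)"
  "end_eval sm F (Times p q) = end_eval sm F q \<circ> end_eval sm F p"
  by (simp_all add: end_eval_def)

lemma ring_eval_sum_term: "ring_eval id s (sum_term k f) = (\<Sum>j<k. ring_eval id s (f j))"
  by (induction k) simp_all

lemma end_eval_sum_term:
  "right_module sm \<Longrightarrow> end_eval sm F (sum_term k f) = (\<lambda>x. \<Sum>j<k. end_eval sm F (f j) x)"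
  by (induction k) (simp_all add: right_module_zero_scalar)

lemma ring_eval_mat_prod_id_terms:
  "(\<forall>p\<in>set (mat_prod_id_terms m k X Y). ring_eval id s p = 0) \<longleftrightarrow>
    mat_prod_is_id m k (\<lambda>i j. s (X i j)) (\<lambda>j i. s (Y j i))"
proof -
  have "ring_eval id s (mat_prod_id_term k X Y i i') =
      (\<Sum>j<k. s (X i j) * s (Y j i')) - (if i = i' then 1 else 0)" for i i'
    by (simp add: mat_prod_id_term_def ring_eval_sum_term)
  then have "ring_eval id s (mat_prod_id_term k X Y i i') = 0 \<longleftrightarrow>
      (\<Sum>j<k. s (X i j) * s (Y j i')) = (if i = i' then 1 else 0)" for i i'
    by simp
  then show ?thesis
    by (simp add: ball_set_mat_prod_id_terms mat_prod_is_id_def)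
qed

lemma end_eval_mat_prod_id_terms:
  assumes sm: "right_module sm"
  shows "(\<forall>p\<in>set (mat_prod_id_terms m k X Y). end_eval sm F p = (\<lambda>_. 0)) \<longleftrightarrow>
    end_mat_prod_is_id m k (\<lambda>i j. F (X i j)) (\<lambda>j i. F (Y j i))"
proof -
  have "end_eval sm F (mat_prod_id_term k X Y i i') =
      (\<lambda>x. (\<Sum>j<k. F (Y j i') (F (X i j) x)) - (if i = i' then x else 0))" for i i'
    by (simp add: mat_prod_id_term_def end_eval_sum_term[OF sm] right_module_one[OF sm]
        right_module_zero_scalar[OF sm])
  then have "end_eval sm F (mat_prod_id_term k X Y i i') = (\<lambda>_. 0) \<longleftrightarrow>
      (\<forall>x. (\<Sum>j<k. F (Y j i') (F (X i j) x)) = (if i = i' then x else 0))" for i i'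
    by (simp add: fun_eq_iff)
  then show ?thesis
    by (simp add: ball_set_mat_prod_id_terms end_mat_prod_is_id_def)
qed

lemma alg_closed_in_End_inverse_matrices:
  fixes sm :: "'x::ab_group_add \<Rightarrow> 'a::ring_1 \<Rightarrow> 'x" and F G :: "nat \<Rightarrow> nat \<Rightarrow> 'x \<Rightarrow> 'x"
  assumes sm: "right_module sm" and closed: "alg_closed_in_End sm"
    and add: "\<And>i j. additive (F i j)" "\<And>j i. additive (G j i)"
    and "end_mat_prod_is_id m k F G" and "end_mat_prod_is_id k m G F"
  obtains P Q :: "nat \<Rightarrow> nat \<Rightarrow> 'a" where "mat_prod_is_id m k P Q" and "mat_prod_is_id k m Q P"
proof -
  define X Y :: "nat \<Rightarrow> nat \<Rightarrow> nat"
    where "X i j = to_nat (False, i, j)" and "Y j i = to_nat (True, j, i)" for i j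
  define H :: "nat \<Rightarrow> 'x \<Rightarrow> 'x"
    where "H v = (case from_nat v :: bool \<times> nat \<times> nat of (False, i, j) \<Rightarrow> F i j | (True, j, i) \<Rightarrow> G j i)"
    for v
  have HX: "(\<lambda>i j. H (X i j)) = F" and HY: "(\<lambda>j i. H (Y j i)) = G"
    by (simp_all add: H_def X_def Y_def)
  let ?ps = "mat_prod_id_terms m k X Y @ mat_prod_id_terms k m Y X :: (nat, 'a) ncterm list"
  have "\<forall>v. additive (H v)"
    using add by (simp add: H_def split: prod.split bool.split)
  moreover have "\<forall>p\<in>set ?ps. end_eval sm H p = (\<lambda>_. 0)"
    using assms(5,6) end_eval_mat_prod_id_terms[OF sm, of m k X Y H]
      end_eval_mat_prod_id_terms[OF sm, of k m Y X H]
    by (auto simp: HX HY)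
  ultimately obtain s where "\<forall>p\<in>set ?ps. ring_eval id s p = 0"
    using closed[unfolded alg_closed_in_End_def, rule_format, of ?ps] by blast
  then show thesis
    using that ring_eval_mat_prod_id_terms[of m k X Y s] ring_eval_mat_prod_id_terms[of k m Y X s]
    by simp
qed

theorem proposition3p1:
  fixes r :: nat and rho sigma :: "nat \<Rightarrow> 'a::ring_1"
    and smG :: "'g::ab_group_add \<Rightarrow> 'a \<Rightarrow> 'g"
    and smH :: "'h::ab_group_add \<Rightarrow> 'a \<Rightarrow> 'h"
    and Bn :: "nat \<Rightarrow> 'h set" and b :: "nat \<Rightarrow> nat \<Rightarrow> 'h" and q :: "'h \<Rightarrow> 'g"
    and E :: "'i::wellorder set" and eta :: "'i \<Rightarrow> nat \<Rightarrow> 'i"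
    and smM :: "'m::ab_group_add \<Rightarrow> 'a \<Rightarrow> 'm"
    and Mf :: "'i \<Rightarrow> 'm set" and x :: "'i \<Rightarrow> nat \<Rightarrow> 'm" and th :: "'i \<Rightarrow> 'h \<Rightarrow> 'm"
  assumes r_pos: "0 < r"
    and A: "is_Ar r rho sigma"
    and G: "corner_group r smG"
    and HB: "HB_data smH Bn b"
    and q_hom: "module_hom smH smG q" and q_surj: "surj q"
    and q_ker: "\<forall>h. q h = 0 \<longleftrightarrow> h \<in> (\<Union>n. Bn n)"
    and w1: "omega1_type TYPE('i)"
    and E_stat: "stationary E" and E_lim: "\<forall>d\<in>E. is_limit d"
    and ladder: "ladder_system E eta"
    and M_mod: "right_module smM"
    and M: "M_construction smH (\<Union>n. Bn n) b E eta smM Mf x th"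
    and closed: "alg_closed_in_End smM"
  shows "\<forall>m k. 0 < m \<longrightarrow> 0 < k \<longrightarrow>
           (grp_iso (dpow m :: (nat \<Rightarrow> 'm) set) (dpow k) \<longleftrightarrow> m mod r = k mod r)"
proof (intro allI impI)
  fix m k :: nat
  assume "0 < m" and "0 < k"
  have L: "leavitt_relations r rho sigma"
    using A by (simp add: is_Ar_def leavitt_relations_def)
  have smG: "right_module smG"
    and distinct: "\<forall>l n. 1 \<le> l \<longrightarrow> l < n \<longrightarrow> n \<le> r \<longrightarrow> \<not> grp_iso (dpow l :: (nat \<Rightarrow> 'g) set) (dpow n)"
    using G by (simp_all add: corner_group_def)
  show "grp_iso (dpow m :: (nat \<Rightarrow> 'm) set) (dpow k) \<longleftrightarrow> m mod r = k mod r"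
  proof
    assume "grp_iso (dpow m :: (nat \<Rightarrow> 'm) set) (dpow k)"
    then obtain F F' :: "nat \<Rightarrow> nat \<Rightarrow> 'm \<Rightarrow> 'm"
      where "\<And>i j. additive (F i j)" "\<And>j i. additive (F' j i)"
        and "end_mat_prod_is_id m k F F'" "end_mat_prod_is_id k m F' F"
      by (rule grp_iso_dpow_end_matrices) blast
    then obtain P Q :: "nat \<Rightarrow> nat \<Rightarrow> 'a" where "mat_prod_is_id m k P Q" "mat_prod_is_id k m Q P"
      by (rule alg_closed_in_End_inverse_matrices[OF M_mod closed])
    then have "grp_iso (dpow m :: (nat \<Rightarrow> 'g) set) (dpow k)"
      by (rule grp_iso_dpow_if_inverse_matrices[OF smG])
    then show "m mod r = k mod r"
      by (rule mod_eq_if_grp_iso_dpow[OF smG L r_pos distinct \<open>0 < m\<close> \<open>0 < k\<close>])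
  next
    assume "m mod r = k mod r"
    then show "grp_iso (dpow m :: (nat \<Rightarrow> 'm) set) (dpow k)"
      by (rule grp_iso_dpow_if_mod_eq[OF M_mod L \<open>0 < m\<close> \<open>0 < k\<close>])
  qed
qed

end
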